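(* If $x\ge1$ and $y\ge1$, then $\Gamma(x,y)\ge B(x,y)$. If $0<x\le1$ and $0<y\le1$, then $\Gamma(x,y)\le B(x,y)$.
   Context: For $x>0,y>0$ the Bigamma function is the (convergent) improper integral $\Gamma(x,y):=\int_0^1(-\ln t)^{x-1}\big(-\ln(1-t)\big)^{y-1}\,dt$. $B(x,y)=\int_0^1t^{x-1}(1-t)^{y-1}\,dt$ is the Euler Beta function. *)

theory Defs
  imports "HOL-Analysis.Analysis"
begin

text \<open>The integrand is nonnegative, so the (convergent) improper integral coincides
  with the Lebesgue integral over the open interval.\<close>
definition Bigamma :: "real \<Rightarrow> real \<Rightarrow> real" where
  "Bigamma x y = (LINT t:{0<..<1}|lborel. (- ln t) powr (x - 1) * (- ln (1 - t)) powr (y - 1))"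

definition BetaInt :: "real \<Rightarrow> real \<Rightarrow> real" where
  "BetaInt x y = (LINT t:{0<..<1}|lborel. t powr (x - 1) * (1 - t) powr (y - 1))"

end

theory Submission
  imports Defs
begin

text \<open>The substitution \<open>t \<mapsto> 1 - t\<close> turns the Bigamma integrand into
  \<open>(-ln (1 - t)) powr (x - 1) * (-ln t) powr (y - 1)\<close>, which is compared factor by
  factor with the Beta integrand \<open>t powr (x - 1) * (1 - t) powr (y - 1)\<close> using
  \<open>t \<le> -ln (1 - t)\<close> and \<open>1 - t \<le> -ln t\<close>: for \<open>x, y \<ge> 1\<close> the Bigamma integrand
  is the larger one, for \<open>x, y \<le> 1\<close> the smaller one. The only analytic point is the
  integrability of the larger side. For \<open>x, y \<le> 1\<close> it is the Beta integrand; for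
  \<open>x, y \<ge> 1\<close> the bound \<open>-ln t \<le> t powr (-\<epsilon>) / \<epsilon>\<close> dominates the Bigamma integrand
  by a multiple of a Beta integrand with parameters in \<open>(1/2, 1]\<close>.\<close>

lemma set_integral_reflect_01:
  fixes f :: "real \<Rightarrow> real"
  shows "(LINT t:{0<..<1}|lborel. f (1 - t)) = (LINT t:{0<..<1}|lborel. f t)"
proof -
  have ind: "indicator {0<..<1} (1 - t) = (indicator {0<..<1} t :: real)" for t :: real
    by (auto simp: indicator_def)
  have "(\<lambda>t. indicator {0<..<1} (1 + (-1) * t) *\<^sub>R f (1 + (-1) * t)) =
        (\<lambda>t. indicator {0<..<1} t *\<^sub>R f (1 - t))"
    by (simp add: ind)
  then show ?thesis
    unfolding set_lebesgue_integral_def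
    using lborel_integral_real_affine[of "-1" "\<lambda>t. indicator {0<..<1} t *\<^sub>R f t" 1]
    by (simp add: ind)
qed

lemma set_integrable_Beta_kernel:
  fixes a b :: real
  assumes "a > 0" "b > 0"
  shows "set_integrable lborel {0<..<1} (\<lambda>t. t powr (a - 1) * (1 - t) powr (b - 1))"
proof -
  have "((\<lambda>t. t powr (a - 1) * (1 - t) powr (b - 1)) has_integral Beta a b) {0<..<1}"
    using has_integral_Beta_real[of a b] assms by (simp add: has_integral_Icc_iff_Ioo)
  then have "(\<lambda>t. t powr (a - 1) * (1 - t) powr (b - 1)) absolutely_integrable_on {0<..<1}"
    by (intro nonnegative_absolutely_integrable_1) auto
  then have "integrable lebesgue (\<lambda>t. indicator {0<..<1} t *\<^sub>R (t powr (a - 1) * (1 - t) powr (b - 1)))"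
    by (simp add: set_integrable_def)
  then show ?thesis
    unfolding set_integrable_def by (subst (asm) integrable_completion) measurable
qed

lemma minus_ln_le_powr:
  fixes t e :: real
  assumes "0 < t" "e > 0"
  shows "- ln t \<le> t powr (- e) / e"
proof -
  have "ln (t powr (- e)) \<le> t powr (- e) - 1"
    using assms by (intro ln_le_minus_one) auto
  then have "e * (- ln t) \<le> t powr (- e)"
    using assms by (simp add: ln_powr)
  then show ?thesis
    using assms by (simp add: field_simps)
qed

lemma minus_ln_powr_le:
  fixes t c :: real
  assumes "0 < t" "t < 1" "c \<ge> 0"
  shows "(- ln t) powr c \<le> (2 * c + 1) powr c * t powr (- (c / (2 * c + 1)))"
proof -
  define e where "e = 1 / (2 * c + 1)"
  have "e > 0"
    using assms by (simp add: e_def)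
  have "(- ln t) powr c \<le> (t powr (- e) / e) powr c"
    using assms minus_ln_le_powr[OF assms(1) \<open>e > 0\<close>] by (intro powr_mono2) auto
  also have "\<dots> = (2 * c + 1) powr c * t powr (- (c / (2 * c + 1)))"
  proof -
    have "(t powr (1 / (2 * c + 1))) powr c = t powr (c / (2 * c + 1))"
      by (simp add: powr_powr)
    then show ?thesis
      using assms
      by (simp add: e_def powr_mult powr_powr[symmetric] powr_divide divide_simps powr_minus)
  qed
  finally show ?thesis .
qed

lemma one_minus_le_minus_ln:
  fixes t :: real
  assumes "0 < t"
  shows "1 - t \<le> - ln t"
  using ln_le_minus_one[OF assms] by simp

lemma Bigamma_reflected:
  "Bigamma x y = (LINT t:{0<..<1}|lborel. (- ln (1 - t)) powr (x - 1) * (- ln t) powr (y - 1))"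
  unfolding Bigamma_def
  using set_integral_reflect_01[of "\<lambda>t. (- ln t) powr (x - 1) * (- ln (1 - t)) powr (y - 1)"]
  by (simp add: mult.commute)

lemma set_borel_measurable_Bigamma_kernel:
  "set_borel_measurable lborel {0<..<1}
     (\<lambda>t::real. (- ln (1 - t)) powr c * (- ln t) powr d)"
  unfolding set_borel_measurable_def by measurable

lemma set_integrable_Bigamma_kernel:
  fixes x y :: real
  assumes "x \<ge> 1" "y \<ge> 1"
  shows "set_integrable lborel {0<..<1} (\<lambda>t. (- ln (1 - t)) powr (x - 1) * (- ln t) powr (y - 1))"
proof -
  define c d where "c = x - 1" and "d = y - 1"
  have "c \<ge> 0" "d \<ge> 0"
    using assms by (auto simp: c_def d_def)
  define K a b where "K = (2 * d + 1) powr d * (2 * c + 1) powr c"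
    and "a = 1 - d / (2 * d + 1)" and "b = 1 - c / (2 * c + 1)"
  have "a > 0" "b > 0"
    using \<open>c \<ge> 0\<close> \<open>d \<ge> 0\<close> by (auto simp: a_def b_def field_simps)
  then have "set_integrable lborel {0<..<1} (\<lambda>t. K * (t powr (a - 1) * (1 - t) powr (b - 1)))"
    by (intro set_integrable_mult_right set_integrable_Beta_kernel)
  moreover have "norm ((- ln (1 - t)) powr c * (- ln t) powr d)
                   \<le> norm (K * (t powr (a - 1) * (1 - t) powr (b - 1)))" if "t \<in> {0<..<1}" for t
  proof -
    have "norm ((- ln (1 - t)) powr c * (- ln t) powr d) = (- ln (1 - t)) powr c * (- ln t) powr d"
      by simp
    also have "\<dots> \<le> ((2 * c + 1) powr c * (1 - t) powr (- (c / (2 * c + 1)))) *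
              ((2 * d + 1) powr d * t powr (- (d / (2 * d + 1))))"
      using that \<open>c \<ge> 0\<close> \<open>d \<ge> 0\<close> minus_ln_powr_le[of "1 - t" c] minus_ln_powr_le[of t d]
      by (intro mult_mono) auto
    also have "\<dots> = K * (t powr (a - 1) * (1 - t) powr (b - 1))"
      by (simp add: K_def a_def b_def)
    also have "\<dots> \<le> norm (K * (t powr (a - 1) * (1 - t) powr (b - 1)))"
      by simp
    finally show ?thesis .
  qed
  ultimately show ?thesis
    unfolding c_def d_def
    by (intro set_integrable_bound[OF _ set_borel_measurable_Bigamma_kernel] AE_I2) auto
qed

lemma BetaInt_le_Bigamma:
  fixes x y :: real
  assumes "x \<ge> 1" "y \<ge> 1"
  shows "BetaInt x y \<le> Bigamma x y"
  unfolding BetaInt_def Bigamma_reflected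
proof (rule set_integral_mono)
  show "set_integrable lborel {0<..<1} (\<lambda>t. t powr (x - 1) * (1 - t) powr (y - 1))"
    using assms by (intro set_integrable_Beta_kernel) auto
  show "set_integrable lborel {0<..<1} (\<lambda>t. (- ln (1 - t)) powr (x - 1) * (- ln t) powr (y - 1))"
    using assms by (rule set_integrable_Bigamma_kernel)
  show "t powr (x - 1) * (1 - t) powr (y - 1) \<le> (- ln (1 - t)) powr (x - 1) * (- ln t) powr (y - 1)"
    if "t \<in> {0<..<1}" for t
    using that assms one_minus_le_minus_ln[of t] one_minus_le_minus_ln[of "1 - t"]
    by (intro mult_mono powr_mono2) auto
qed

lemma Bigamma_le_BetaInt:
  fixes x y :: real
  assumes "0 < x" "x \<le> 1" "0 < y" "y \<le> 1"
  shows "Bigamma x y \<le> BetaInt x y"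
proof -
  have Beta_integrable: "set_integrable lborel {0<..<1} (\<lambda>t. t powr (x - 1) * (1 - t) powr (y - 1))"
    using assms by (intro set_integrable_Beta_kernel) auto
  have le: "(- ln (1 - t)) powr (x - 1) * (- ln t) powr (y - 1) \<le> t powr (x - 1) * (1 - t) powr (y - 1)"
    if "t \<in> {0<..<1}" for t
    using that assms one_minus_le_minus_ln[of t] one_minus_le_minus_ln[of "1 - t"]
    by (intro mult_mono powr_mono2') auto
  have "set_integrable lborel {0<..<1} (\<lambda>t. (- ln (1 - t)) powr (x - 1) * (- ln t) powr (y - 1))"
    using le by (intro set_integrable_bound[OF Beta_integrable set_borel_measurable_Bigamma_kernel] AE_I2)
      auto
  then show ?thesis
    unfolding BetaInt_def Bigamma_reflected using Beta_integrable le by (rule set_integral_mono)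
qed

theorem mainTheorem9:
  fixes x y :: real
  shows "(x \<ge> 1 \<and> y \<ge> 1 \<longrightarrow> Bigamma x y \<ge> BetaInt x y) \<and>
         (0 < x \<and> x \<le> 1 \<and> 0 < y \<and> y \<le> 1 \<longrightarrow> Bigamma x y \<le> BetaInt x y)"
  using BetaInt_le_Bigamma Bigamma_le_BetaInt by blast

end
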